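(* Let $\mathcal C$ be a concept hierarchy, $r_1,r_2,\epsilon\in[0,1]$ with $r_1\le r_2(1-\epsilon)$, $m$ a positive integer, and let $\mathcal A_2$ and $\mathcal H$ be the networks defined below (with $\mathcal H$ having a fixed failed set $F$ satisfying the stated constraint). Then $\mathcal H$ $implements_2$ $\mathcal A_2$: for every $B\subseteq C_0$, in the executions of $\mathcal A_2$ and $\mathcal H$ on input $B$, for every concept $c$, if $rep(c)$ does not fire at time $level(c)$ in $\mathcal A_2$, then no neuron in $reps(c)$ fires at time $level(c)$ in $\mathcal H$.
   Context: Concept hierarchies: fix positive integers $\ell_{max},n,k$. A universal set $D$ of concepts is partitioned into disjoint sets $D_0,\dots,D_{\ell_{max}}$ with $|D_0|=n$; $level(c)=\ell$ for $c\in D_\ell$. A concept hierarchy $\mathcal C$ consists of $C\subseteq D$, with $C_\ell=C\cap D_\ell$, and for each $c\in C_\ell$ with $1\le\ell\le\ell_{max}$ a set $children(c)\subseteq C_{\ell-1}$, such that $|C_{\ell_{max}}|=k$, $|children(c)|=k$ for all such $c$, and $children(c)\cap children(c')=\emptyset$ for distinct $c,c'\in C_\ell$. Common network dynamics: neurons partitioned into layers $N_0,\dots,N_{\ell_{max}}$; threshold $\tau$; weights $w(u,v)\in\{0,1\}$ for $u\in N_{\ell-1}$, $v\in N_\ell$. Failed neurons never fire. A non-failed neuron $v\in N_\ell$, $\ell\ge1$, does not fire at time 0 and fires at time $t\ge1$ iff $\sum_{u\in N_{\ell-1}}w(u,v)x_u(t-1)\ge\tau$, where $x_u(s)\in\{0,1\}$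 indicates whether $u$ fires at time $s$. $\mathcal A_2$: no failures; each $c\in D_0$ has $rep(c)\in N_0$, each $c\in C$ with $level(c)\ge1$ has $rep(c)\in N_{level(c)}$, all distinct; $w(u,v)=1$ iff $v=rep(c)$, $u=rep(c')$ for a child $c'$ of $c$, else $0$; $\tau=r_1k$. Input $B\subseteq C_0$: the layer-0 neurons $rep(b)$, $b\in B$, fire at time 0, no other layer-0 neuron fires at time 0, and no layer-0 neuron fires at any other time. $\mathcal H$: each $c\in D_0$ has a set $reps(c)$ of $m$ neurons in $N_0$, each $c\in C$ with $level(c)\ge1$ a set $reps(c)$ of $m$ neurons in $N_{level(c)}$, all pairwise disjoint; $w(u,v)=1$ iff $v\in reps(c)$ and $u\in reps(c')$ for a child $c'$ of $c$, else $0$; $\tau=r_2km(1-\epsilon)$. A fixed set $F$ of neurons is failed, such that for every concept $c$ at least $m(1-\epsilon)$ neurons of $reps(c)$ are not in $F$. Input $B\subseteq C_0$: a layer-0 neuron fires at time 0 iff it is in $\bigcup_{b\in B}reps(b)\setminus F$, and no layer-0 neuron fires at any other time. *)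

theory Defs
  imports Complex_Main
begin

definition concept_hierarchy ::
  "nat \<Rightarrow> nat \<Rightarrow> nat \<Rightarrow> 'c set \<Rightarrow> ('c \<Rightarrow> nat) \<Rightarrow> 'c set \<Rightarrow> ('c \<Rightarrow> 'c set) \<Rightarrow> bool" where
  "concept_hierarchy lmax n k D level C children \<longleftrightarrow>
     (\<forall>c\<in>D. level c \<le> lmax) \<and>
     card {c\<in>D. level c = 0} = n \<and>
     C \<subseteq> D \<and>
     card {c\<in>C. level c = lmax} = k \<and>
     (\<forall>c\<in>C. 1 \<le> level c \<longrightarrow>
        children c \<subseteq> {c'\<in>C. level c' = level c - 1} \<and> card (children c) = k) \<and>
     (\<forall>c\<in>C. \<forall>c'\<in>C. 1 \<le> level c \<and> level c' = level c \<and> c \<noteq> c' \<longrightarrow>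
        children c \<inter> children c' = {})"

definition rep_concepts :: "'c set \<Rightarrow> ('c \<Rightarrow> nat) \<Rightarrow> 'c set \<Rightarrow> 'c set" where
  "rep_concepts D level C = {c\<in>D. level c = 0} \<union> C"

text \<open>Neurons N (finite), layer function lay, weights w, threshold tau, failed set F,
  and the set I of layer-0 neurons that fire at time 0 (input).\<close>

fun fires :: "'n set \<Rightarrow> ('n \<Rightarrow> nat) \<Rightarrow> ('n \<Rightarrow> 'n \<Rightarrow> real) \<Rightarrow> real \<Rightarrow> 'n set \<Rightarrow> 'n set
              \<Rightarrow> nat \<Rightarrow> 'n \<Rightarrow> bool" where
  "fires N lay w tau F I 0 v \<longleftrightarrow> v \<in> N \<and> v \<notin> F \<and> lay v = 0 \<and> v \<in> I"
| "fires N lay w tau F I (Suc t) v \<longleftrightarrow> v \<in> N \<and> v \<notin> F \<and> 1 \<le> lay v \<and>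
     tau \<le> (\<Sum>u\<in>{u\<in>N. lay u = lay v - 1}. w u v * (if fires N lay w tau F I t u then 1 else 0))"

definition network_layers :: "'n set \<Rightarrow> ('n \<Rightarrow> nat) \<Rightarrow> nat \<Rightarrow> bool" where
  "network_layers N lay lmax \<longleftrightarrow> finite N \<and> (\<forall>v\<in>N. lay v \<le> lmax)"

definition A2_layout :: "'n set \<Rightarrow> ('n \<Rightarrow> nat) \<Rightarrow> ('c \<Rightarrow> 'n) \<Rightarrow> 'c set \<Rightarrow> ('c \<Rightarrow> nat) \<Rightarrow> 'c set \<Rightarrow> bool" where
  "A2_layout N lay rep D level C \<longleftrightarrow>
     inj_on rep (rep_concepts D level C) \<and>
     (\<forall>c\<in>rep_concepts D level C. rep c \<in> N \<and> lay (rep c) = level c)"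

definition A2_weight :: "('c \<Rightarrow> 'n) \<Rightarrow> ('c \<Rightarrow> nat) \<Rightarrow> 'c set \<Rightarrow> ('c \<Rightarrow> 'c set) \<Rightarrow> 'n \<Rightarrow> 'n \<Rightarrow> real" where
  "A2_weight rep level C children u v =
     (if \<exists>c\<in>C. 1 \<le> level c \<and> v = rep c \<and> (\<exists>c'\<in>children c. u = rep c') then 1 else 0)"

definition H_layout :: "'m set \<Rightarrow> ('m \<Rightarrow> nat) \<Rightarrow> ('c \<Rightarrow> 'm set) \<Rightarrow> nat \<Rightarrow> 'c set \<Rightarrow> ('c \<Rightarrow> nat) \<Rightarrow> 'c set \<Rightarrow> bool" where
  "H_layout N lay reps m D level C \<longleftrightarrow>
     (\<forall>c\<in>rep_concepts D level C. reps c \<subseteq> N \<and> card (reps c) = m \<and> (\<forall>u\<in>reps c. lay u = level c)) \<and>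
     (\<forall>c\<in>rep_concepts D level C. \<forall>c'\<in>rep_concepts D level C. c \<noteq> c' \<longrightarrow> reps c \<inter> reps c' = {})"

definition H_weight :: "('c \<Rightarrow> 'm set) \<Rightarrow> ('c \<Rightarrow> nat) \<Rightarrow> 'c set \<Rightarrow> ('c \<Rightarrow> 'c set) \<Rightarrow> 'm \<Rightarrow> 'm \<Rightarrow> real" where
  "H_weight reps level C children u v =
     (if \<exists>c\<in>C. 1 \<le> level c \<and> v \<in> reps c \<and> (\<exists>c'\<in>children c. u \<in> reps c') then 1 else 0)"

end

theory Submission
  imports Defs
begin

text \<open>We show the contrapositive by induction on the level: if a neuron of \<open>reps c\<close> fires in
  \<open>\<H>\<close> at time \<open>level c\<close>, then at least \<open>r\<^sub>2 k m (1 - \<epsilon>)\<close> of its firing inputs lie in the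
  sets \<open>reps c'\<close> of children \<open>c'\<close> of \<open>c\<close>, and by induction \<open>rep c'\<close> fires in \<open>\<A>\<^sub>2\<close> for each of
  them.  As every \<open>reps c'\<close> has only \<open>m\<close> neurons, at least \<open>r\<^sub>2 k (1 - \<epsilon>) \<ge> r\<^sub>1 k\<close> children of
  \<open>c\<close> fire in \<open>\<A>\<^sub>2\<close>, so \<open>rep c\<close> fires too.  Failed neurons only suppress firing in \<open>\<H>\<close>.\<close>

lemma fires_Suc_iff_card:
  assumes "finite N" and "\<And>u. w u v = 0 \<or> w u v = 1"
  shows "fires N lay w tau F I (Suc t) v \<longleftrightarrow> v \<in> N \<and> v \<notin> F \<and> 1 \<le> lay v \<and>
           tau \<le> card {u \<in> N. lay u = lay v - 1 \<and> w u v = 1 \<and> fires N lay w tau F I t u}"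
proof -
  let ?f = "fires N lay w tau F I t"
  have "(\<Sum>u\<in>{u\<in>N. lay u = lay v - 1}. w u v * (if ?f u then 1 else 0))
      = (\<Sum>u\<in>{u\<in>N. lay u = lay v - 1}. if w u v = 1 \<and> ?f u then 1 else 0)"
    using assms(2) by (intro sum.cong) auto
  also have "\<dots> = card {u \<in> N. lay u = lay v - 1 \<and> w u v = 1 \<and> ?f u}"
    using assms(1) by (simp add: sum.If_cases Int_def conj_assoc)
  finally show ?thesis by simp
qed

lemma A2_weight_0_or_1:
  "A2_weight rep level C children u v = 0 \<or> A2_weight rep level C children u v = 1"
  by (simp add: A2_weight_def)

lemma A2_firing_inputs:
  assumes "A2_layout N lay rep D level C" and "c \<in> C" and "1 \<le> level c"
    and "children c \<subseteq> {c'\<in>C. level c' = level c - 1}"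
  shows "{u \<in> N. lay u = level c - 1 \<and> A2_weight rep level C children u (rep c) = 1 \<and> P u}
       = rep ` {c' \<in> children c. P (rep c')}"
proof -
  have inj: "inj_on rep C" and rep: "\<And>c. c \<in> C \<Longrightarrow> rep c \<in> N \<and> lay (rep c) = level c"
    using assms(1) by (auto simp: A2_layout_def rep_concepts_def intro: inj_on_subset)
  have "c0 = c" if "c0 \<in> C" "rep c = rep c0" for c0
    using inj_onD[OF inj] that assms(2) by metis
  then show ?thesis
    using assms(2-4) rep by (auto simp: A2_weight_def)
qed

lemma A2_fires_Suc_iff:
  assumes "finite N" and "A2_layout N lay rep D level C" and "c \<in> C" and "1 \<le> level c"
    and "children c \<subseteq> {c'\<in>C. level c' = level c - 1}"
  shows "fires N lay (A2_weight rep level C children) tau F I (Suc t) (rep c) \<longleftrightarrow>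
           rep c \<notin> F \<and>
           tau \<le> card {c' \<in> children c.
                        fires N lay (A2_weight rep level C children) tau F I t (rep c')}"
proof -
  have inj: "inj_on rep (children c)" and rep: "rep c \<in> N" "lay (rep c) = level c"
    using assms(2,3,5) by (auto simp: A2_layout_def rep_concepts_def intro: inj_on_subset)
  have "{u \<in> N. lay u = level c - 1 \<and> A2_weight rep level C children u (rep c) = 1 \<and>
           fires N lay (A2_weight rep level C children) tau F I t u}
      = rep ` {c' \<in> children c. fires N lay (A2_weight rep level C children) tau F I t (rep c')}"
    using assms(2-5) by (rule A2_firing_inputs)
  then show ?thesis
    unfolding fires_Suc_iff_card[OF assms(1) A2_weight_0_or_1]
    using assms(4) rep by (simp add: card_image[OF inj_on_subset[OF inj]])
qed

lemma H_weight_0_or_1: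
  "H_weight reps level C children u v = 0 \<or> H_weight reps level C children u v = 1"
  by (simp add: H_weight_def)

lemma H_firing_inputs:
  assumes "H_layout N lay reps m D level C" and "c \<in> C" and "1 \<le> level c" and "u \<in> reps c"
    and "children c \<subseteq> {c'\<in>C. level c' = level c - 1}"
  shows "{v \<in> N. lay v = level c - 1 \<and> H_weight reps level C children v u = 1 \<and> P v}
       = {v \<in> \<Union>(reps ` children c). P v}"
proof -
  have reps: "\<And>c v. c \<in> C \<Longrightarrow> v \<in> reps c \<Longrightarrow> v \<in> N \<and> lay v = level c"
    and disj: "\<And>c c'. c \<in> C \<Longrightarrow> c' \<in> C \<Longrightarrow> c \<noteq> c' \<Longrightarrow> reps c \<inter> reps c' = {}"
    using assms(1) by (auto simp: H_layout_def rep_concepts_def)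
  have unique: "c0 = c" if "c0 \<in> C" "u \<in> reps c0" for c0
    using disj[OF that(1) assms(2)] that(2) assms(4) by blast
  have weight: "H_weight reps level C children v u = 1 \<longleftrightarrow> v \<in> \<Union>(reps ` children c)" for v
  proof
    assume "H_weight reps level C children v u = 1"
    then obtain c0 c' where c0: "c0 \<in> C" "u \<in> reps c0" and "c' \<in> children c0" "v \<in> reps c'"
      unfolding H_weight_def by (auto split: if_splits)
    with unique[OF c0] show "v \<in> \<Union>(reps ` children c)"
      by blast
  next
    assume "v \<in> \<Union>(reps ` children c)"
    then show "H_weight reps level C children v u = 1"
      unfolding H_weight_def using assms(2-4) by auto
  qed
  have "v \<in> N \<and> lay v = level c - 1" if "v \<in> \<Union>(reps ` children c)" for v
  proof -
    from that obtain c' where "c' \<in> children c" "v \<in> reps c'"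
      by blast
    with assms(5) reps show ?thesis
      by auto
  qed
  with weight show ?thesis
    by blast
qed

lemma H_fires_Suc_iff:
  assumes "finite N" and "H_layout N lay reps m D level C" and "c \<in> C" and "1 \<le> level c"
    and "u \<in> reps c" and "children c \<subseteq> {c'\<in>C. level c' = level c - 1}"
  shows "fires N lay (H_weight reps level C children) tau F I (Suc t) u \<longleftrightarrow>
           u \<notin> F \<and>
           tau \<le> card {v \<in> \<Union>(reps ` children c).
                        fires N lay (H_weight reps level C children) tau F I t v}"
proof -
  have "u \<in> N" "lay u = level c"
    using assms(2,3,5) by (auto simp: H_layout_def rep_concepts_def)
  moreover have "{v \<in> N. lay v = level c - 1 \<and> H_weight reps level C children v u = 1 \<and>
                   fires N lay (H_weight reps level C children) tau F I t v}
      = {v \<in> \<Union>(reps ` children c). fires N lay (H_weight reps level C children) tau F I t v}"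
    using assms(2-6) by (rule H_firing_inputs)
  ultimately show ?thesis
    unfolding fires_Suc_iff_card[OF assms(1) H_weight_0_or_1]
    using assms(4) by simp
qed

locale hierarchy_networks =
  fixes D C :: "'c set" and level :: "'c \<Rightarrow> nat" and children :: "'c \<Rightarrow> 'c set"
    and N1 :: "'n set" and lay1 :: "'n \<Rightarrow> nat" and rep :: "'c \<Rightarrow> 'n"
    and N2 :: "'m set" and lay2 :: "'m \<Rightarrow> nat" and reps :: "'c \<Rightarrow> 'm set" and m :: nat
  assumes children_subset:
      "\<And>c. c \<in> C \<Longrightarrow> 1 \<le> level c \<Longrightarrow> children c \<subseteq> {c'\<in>C. level c' = level c - 1}"
    and finite_N1: "finite N1" and A2_layout: "A2_layout N1 lay1 rep D level C"
    and finite_N2: "finite N2" and H_layout: "H_layout N2 lay2 reps m D level C"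
begin

abbreviation A2_fires :: "real \<Rightarrow> 'c set \<Rightarrow> nat \<Rightarrow> 'n \<Rightarrow> bool" where
  "A2_fires tau B \<equiv> fires N1 lay1 (A2_weight rep level C children) tau {} (rep ` B)"

abbreviation H_fires :: "real \<Rightarrow> 'm set \<Rightarrow> 'c set \<Rightarrow> nat \<Rightarrow> 'm \<Rightarrow> bool" where
  "H_fires tau F B \<equiv> fires N2 lay2 (H_weight reps level C children) tau F (\<Union>b\<in>B. reps b)"

lemma card_reps: "c \<in> rep_concepts D level C \<Longrightarrow> card (reps c) = m"
  using H_layout by (simp add: H_layout_def)

lemma H_fires_0_imp_A2_fires_0:
  assumes "B \<subseteq> {c\<in>C. level c = 0}" and "c \<in> rep_concepts D level C" and "u \<in> reps c"
    and "H_fires tauH F B 0 u"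
  shows "A2_fires tauA B 0 (rep c)"
proof -
  obtain b where b: "b \<in> B" "u \<in> reps b"
    using assms(4) by auto
  have "b \<in> rep_concepts D level C"
    using b(1) assms(1) by (auto simp: rep_concepts_def)
  with b(2) assms(2,3) H_layout have "b = c"
    unfolding H_layout_def by blast
  with b(1) assms(1) A2_layout show ?thesis
    by (auto simp: A2_layout_def rep_concepts_def)
qed

lemma H_fires_Suc_imp_A2_fires_Suc:
  assumes "real m * tauA \<le> tauH" and "0 < m"
    and c: "c \<in> C" "1 \<le> level c" and "u \<in> reps c"
    and "H_fires tauH F B (Suc t) u"
    and IH: "\<And>c' v. c' \<in> children c \<Longrightarrow> v \<in> reps c' \<Longrightarrow> H_fires tauH F B t v
               \<Longrightarrow> A2_fires tauA B t (rep c')"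
  shows "A2_fires tauA B (Suc t) (rep c)"
proof -
  let ?S = "{c' \<in> children c. A2_fires tauA B t (rep c')}"
  have S_concepts: "?S \<subseteq> rep_concepts D level C"
    using children_subset[OF c] by (auto simp: rep_concepts_def)
  have "finite (rep ` ?S)"
    using S_concepts A2_layout finite_N1 by (auto simp: A2_layout_def intro: finite_subset)
  then have finite_S: "finite ?S"
    using S_concepts A2_layout by (auto simp: A2_layout_def dest: finite_imageD inj_on_subset)
  have "{v \<in> \<Union>(reps ` children c). H_fires tauH F B t v} \<subseteq> \<Union>(reps ` ?S)"
    using IH by blast
  moreover have "\<Union>(reps ` ?S) \<subseteq> N2"
    using S_concepts H_layout by (auto simp: H_layout_def)
  ultimately have
    "card {v \<in> \<Union>(reps ` children c). H_fires tauH F B t v} \<le> card (\<Union>(reps ` ?S))"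
    using finite_N2 by (intro card_mono) (auto intro: finite_subset)
  also have "\<dots> \<le> (\<Sum>c'\<in>?S. card (reps c'))"
    by (rule card_UN_le[OF finite_S])
  also have "\<dots> = m * card ?S"
    using S_concepts card_reps by (simp add: subset_eq)
  finally have
    "real (card {v \<in> \<Union>(reps ` children c). H_fires tauH F B t v}) \<le> real m * card ?S"
    by (simp only: of_nat_mult [symmetric] of_nat_le_iff)
  moreover have "tauH \<le> card {v \<in> \<Union>(reps ` children c). H_fires tauH F B t v}"
    using assms(6)
    unfolding H_fires_Suc_iff[where children = children,
        OF finite_N2 H_layout c assms(5) children_subset[OF c]]
    by (rule conjunct2)
  ultimately have "real m * tauA \<le> real m * card ?S"
    using assms(1) by linarith
  then have "tauA \<le> card ?S"
    using \<open>0 < m\<close> by simp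
  then show ?thesis
    unfolding A2_fires_Suc_iff[where children = children,
        OF finite_N1 A2_layout c children_subset[OF c]]
    by simp
qed

lemma H_fires_imp_A2_fires:
  assumes "real m * tauA \<le> tauH" and "0 < m" and "B \<subseteq> {c\<in>C. level c = 0}"
  shows "c \<in> rep_concepts D level C \<Longrightarrow> u \<in> reps c \<Longrightarrow> H_fires tauH F B (level c) u
           \<Longrightarrow> A2_fires tauA B (level c) (rep c)"
proof (induction "level c" arbitrary: c u)
  case 0
  then show ?case
    using H_fires_0_imp_A2_fires_0[OF assms(3)] by metis
next
  case (Suc t)
  then have c: "c \<in> C" "1 \<le> level c"
    by (auto simp: rep_concepts_def)
  have "A2_fires tauA B t (rep c')"
    if "c' \<in> children c" "v \<in> reps c'" "H_fires tauH F B t v" for c' v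
  proof -
    have "c' \<in> C" "level c' = t"
      using that(1) children_subset[OF c] Suc.hyps(2) by auto
    then show ?thesis
      using Suc.hyps(1)[of c' v] that(2,3) by (simp add: rep_concepts_def)
  qed
  with Suc.prems Suc.hyps(2) show ?case
    using H_fires_Suc_imp_A2_fires_Suc[OF assms(1,2) c] by metis
qed

end

theorem theorem7p3:
  fixes lmax n k m :: nat
    and D C :: "'c set" and level :: "'c \<Rightarrow> nat" and children :: "'c \<Rightarrow> 'c set"
    and r1 r2 \<epsilon> :: real
    and N1 :: "'n set" and lay1 :: "'n \<Rightarrow> nat" and rep :: "'c \<Rightarrow> 'n"
    and N2 :: "'m set" and lay2 :: "'m \<Rightarrow> nat" and reps :: "'c \<Rightarrow> 'm set" and F :: "'m set"
  assumes "0 < lmax" "0 < n" "0 < k"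
    and hier: "concept_hierarchy lmax n k D level C children"
    and "0 \<le> r1" "r1 \<le> 1" "0 \<le> r2" "r2 \<le> 1" "0 \<le> \<epsilon>" "\<epsilon> \<le> 1"
    and "r1 \<le> r2 * (1 - \<epsilon>)"
    and "0 < m"
    and A2_net: "network_layers N1 lay1 lmax" "A2_layout N1 lay1 rep D level C"
    and H_net: "network_layers N2 lay2 lmax" "H_layout N2 lay2 reps m D level C"
    and F_ok: "\<forall>c\<in>rep_concepts D level C. real (card (reps c - F)) \<ge> real m * (1 - \<epsilon>)"
  shows "\<forall>B \<subseteq> {c\<in>C. level c = 0}. \<forall>c\<in>rep_concepts D level C.
           \<not> fires N1 lay1 (A2_weight rep level C children) (r1 * real k) {} (rep ` B)
               (level c) (rep c)
           \<longrightarrow> (\<forall>u\<in>reps c. \<not> fires N2 lay2 (H_weight reps level C children)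
                  (r2 * real k * real m * (1 - \<epsilon>)) F (\<Union>b\<in>B. reps b) (level c) u)"
proof -
  interpret hierarchy_networks D C level children N1 lay1 rep N2 lay2 reps m
    using hier A2_net H_net by unfold_locales (auto simp: concept_hierarchy_def network_layers_def)
  have "r1 * (real k * real m) \<le> r2 * (1 - \<epsilon>) * (real k * real m)"
    using \<open>r1 \<le> r2 * (1 - \<epsilon>)\<close> by (rule mult_right_mono) simp
  then have "real m * (r1 * real k) \<le> r2 * real k * real m * (1 - \<epsilon>)"
    by (simp add: algebra_simps)
  then show ?thesis
    using H_fires_imp_A2_fires[OF _ \<open>0 < m\<close>] by blast
qed

end
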